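(* Let $P_1,P_2\in\mathbf{C}^{n\times n}$. The following three statements are equivalent: (1) $\{P_1,P_2\}>0$ (resp. $\geq 0$); (2) $\{P_1,P_2\}_\circ>0$ (resp. $\geq 0$); (3) $\{P_1,P_2\}_\diamond>0$ (resp. $\geq0$). Moreover, a real matrix $P\in\mathbf{R}^{2n\times 2n}$ is positive definite (resp. positive semidefinite) if and only if there exists a unique bimatrix $\{P_1,P_2\}>0$ (resp. $\geq 0$) such that $\{P_1,P_2\}_\circ=P$.
   Context: $P^{\#}$, $P^{\mathrm T}$, $P^{\mathrm H}$ denote entrywise conjugate, transpose, conjugate transpose. For $A_1,A_2\in\mathbf{C}^{n\times m}$ the bimatrix $\{A_1,A_2\}$ is the real-linear map $x\mapsto A_1x+A_2^{\#}x^{\#}$ (equality = equality as maps, equivalently of the pairs). Its conjugate transpose is $\{A_1,A_2\}^{\mathrm H}=\{A_1^{\mathrm H},A_2^{\mathrm T}\}$. A square bimatrix $\{P_1,P_2\}$ is Hermite if $\{P_1,P_2\}=\{P_1,P_2\}^{\mathrm H}$, i.e. $P_1=P_1^{\mathrm H}$ and $P_2=P_2^{\mathrm T}$. It is positive definite (resp. semidefinite), written $\{P_1,P_2\}>0$ (resp. $\geq0$), if it is Hermite and $\mathrm{Re}\big(x^{\mathrm H}(P_1x+P_2^{\#}x^{\#})\big)>0$ (resp. $\geq 0$) for all nonzero $x\in\mathbf{C}^n$. Complex lifting: $\{P_1,P_2\}_\diamond=\begin{bmatrix}P_1 & P_2^{\#}\\ P_2 & P_1^{\#}\end{bmatrix}$.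 Real representation: $\{P_1,P_2\}_\circ=\begin{bmatrix}\mathrm{Re}(P_1+P_2) & -\mathrm{Im}(P_1+P_2)\\ \mathrm{Im}(P_1-P_2) & \mathrm{Re}(P_1-P_2)\end{bmatrix}$. For an ordinary (real or complex) square matrix, $>0$ (resp. $\geq0$) means Hermitian (symmetric if real) positive definite (resp. semidefinite). *)

theory Defs
  imports "HOL-Analysis.Analysis"
begin

text \<open>Square complex n x n matrices are modelled as complex^'n^'n (dimension n = CARD('n));
  2n x 2n matrices are indexed by the disjoint sum 'n + 'n (first block = Inl, second = Inr).\<close>

definition cmat_conj :: "complex^'m^'n \<Rightarrow> complex^'m^'n" where
  "cmat_conj A = (\<chi> i j. cnj (A $ i $ j))"

definition cvec_conj :: "complex^'n \<Rightarrow> complex^'n" where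
  "cvec_conj x = (\<chi> i. cnj (x $ i))"

definition cmat_adj :: "complex^'m^'n \<Rightarrow> complex^'n^'m" where
  "cmat_adj A = transpose (cmat_conj A)"

definition cinner :: "complex^'n \<Rightarrow> complex^'n \<Rightarrow> complex" where
  "cinner x y = (\<Sum>i\<in>UNIV. cnj (x $ i) * y $ i)"

definition bimat_apply :: "complex^'m^'n \<Rightarrow> complex^'m^'n \<Rightarrow> complex^'m \<Rightarrow> complex^'n" where
  "bimat_apply A1 A2 x = A1 *v x + cmat_conj A2 *v cvec_conj x"

definition bimat_hermite :: "complex^'n^'n \<Rightarrow> complex^'n^'n \<Rightarrow> bool" where
  "bimat_hermite P1 P2 \<longleftrightarrow> P1 = cmat_adj P1 \<and> P2 = transpose P2"

definition bimat_pd :: "complex^'n^'n \<Rightarrow> complex^'n^'n \<Rightarrow> bool" where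
  "bimat_pd P1 P2 \<longleftrightarrow> bimat_hermite P1 P2 \<and>
     (\<forall>x. x \<noteq> 0 \<longrightarrow> Re (cinner x (bimat_apply P1 P2 x)) > 0)"

definition bimat_psd :: "complex^'n^'n \<Rightarrow> complex^'n^'n \<Rightarrow> bool" where
  "bimat_psd P1 P2 \<longleftrightarrow> bimat_hermite P1 P2 \<and>
     (\<forall>x. x \<noteq> 0 \<longrightarrow> Re (cinner x (bimat_apply P1 P2 x)) \<ge> 0)"

definition bimat_lift :: "complex^'n^'n \<Rightarrow> complex^'n^'n \<Rightarrow> complex^('n+'n)^('n+'n)" where
  "bimat_lift P1 P2 = (\<chi> i j. case (i, j) of
      (Inl a, Inl b) \<Rightarrow> P1 $ a $ b
    | (Inl a, Inr b) \<Rightarrow> cnj (P2 $ a $ b)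
    | (Inr a, Inl b) \<Rightarrow> P2 $ a $ b
    | (Inr a, Inr b) \<Rightarrow> cnj (P1 $ a $ b))"

definition bimat_real :: "complex^'n^'n \<Rightarrow> complex^'n^'n \<Rightarrow> real^('n+'n)^('n+'n)" where
  "bimat_real P1 P2 = (\<chi> i j. case (i, j) of
      (Inl a, Inl b) \<Rightarrow> Re (P1 $ a $ b + P2 $ a $ b)
    | (Inl a, Inr b) \<Rightarrow> - Im (P1 $ a $ b + P2 $ a $ b)
    | (Inr a, Inl b) \<Rightarrow> Im (P1 $ a $ b - P2 $ a $ b)
    | (Inr a, Inr b) \<Rightarrow> Re (P1 $ a $ b - P2 $ a $ b))"

definition cmat_pd :: "complex^'n^'n \<Rightarrow> bool" where
  "cmat_pd M \<longleftrightarrow> M = cmat_adj M \<and> (\<forall>x. x \<noteq> 0 \<longrightarrow> Re (cinner x (M *v x)) > 0)"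

definition cmat_psd :: "complex^'n^'n \<Rightarrow> bool" where
  "cmat_psd M \<longleftrightarrow> M = cmat_adj M \<and> (\<forall>x. x \<noteq> 0 \<longrightarrow> Re (cinner x (M *v x)) \<ge> 0)"

definition rmat_pd :: "real^'n^'n \<Rightarrow> bool" where
  "rmat_pd M \<longleftrightarrow> M = transpose M \<and> (\<forall>x. x \<noteq> 0 \<longrightarrow> x \<bullet> (M *v x) > 0)"

definition rmat_psd :: "real^'n^'n \<Rightarrow> bool" where
  "rmat_psd M \<longleftrightarrow> M = transpose M \<and> (\<forall>x. x \<noteq> 0 \<longrightarrow> x \<bullet> (M *v x) \<ge> 0)"

end

theory Submission
  imports Defs
begin

(*
  In the coordinates (Re x, Im x) the real form Re (x^H (P1 x + P2^# x^#)) of the bimatrix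
  is literally the quadratic form of its real representation, and the Hermite conditions
  become symmetry; this gives the equivalence with the real representation.
  For the complex lifting, a vector (x; x^#) sees twice the bimatrix form. Conversely every
  z in C^(2n) splits as (p; p^#) + i (q; q^#); since the lifted form is real on vectors of
  the shape (p; p^#) and the lifting is Hermitian, the cross terms cancel and the form at z
  is twice the sum of the bimatrix forms at p and q.
  Finally {P1, P2} \<mapsto> {P1, P2}_o is a bijection onto the real 2n x 2n matrices, which
  yields existence and uniqueness of the bimatrix with a prescribed real representation.
*)

abbreviation bimat_qform :: "complex^'n^'n \<Rightarrow> complex^'n^'n \<Rightarrow> complex^'n \<Rightarrow> real" where
  "bimat_qform P1 P2 x \<equiv> Re (cinner x (bimat_apply P1 P2 x))"

abbreviation cmat_qform :: "complex^'n^'n \<Rightarrow> complex^'n \<Rightarrow> real" where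
  "cmat_qform M x \<equiv> Re (cinner x (M *v x))"

lemma sum_UNIV_Plus:
  fixes f :: "'a::finite + 'b::finite \<Rightarrow> 'c::comm_monoid_add"
  shows "(\<Sum>i\<in>UNIV. f i) = (\<Sum>a\<in>UNIV. f (Inl a)) + (\<Sum>b\<in>UNIV. f (Inr b))"
  by (subst UNIV_Plus_UNIV [symmetric], subst sum.Plus) (simp_all add: comp_def)

lemma all_Plus_blocks_iff:
  "(\<forall>i j. R i j) \<longleftrightarrow> (\<forall>a b. \<forall>i \<in> {Inl a, Inr a}. \<forall>j \<in> {Inl b, Inr b}. R i j)"
  by (auto simp: split_sum_all)

lemma all_nonzero_surj_iff:
  assumes "surj h" and "\<And>x. h x = 0 \<longleftrightarrow> x = 0"
  shows "(\<forall>x. x \<noteq> 0 \<longrightarrow> P (h x)) \<longleftrightarrow> (\<forall>y. y \<noteq> 0 \<longrightarrow> P y)"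
  using assms by (metis surjD)

lemma ex1_preimage_iff:
  assumes "bij g" and "\<And>x. S x \<longleftrightarrow> R (g x)"
  shows "R y \<longleftrightarrow> (\<exists>!x. S x \<and> g x = y)"
  using assms by (metis bij_iff)

lemma cinner_zero_left [simp]: "cinner 0 y = 0"
  by (simp add: cinner_def)

lemma cinner_add_left: "cinner (x + y) z = cinner x z + cinner y z"
  by (simp add: cinner_def distrib_right sum.distrib)

lemma cinner_add_right: "cinner x (y + z) = cinner x y + cinner x z"
  by (simp add: cinner_def distrib_left sum.distrib)

lemma cinner_smult_left: "cinner (c *s x) y = cnj c * cinner x y"
  by (simp add: cinner_def sum_distrib_left algebra_simps)

lemma cinner_smult_right: "cinner x (c *s y) = c * cinner x y"
  by (simp add: cinner_def sum_distrib_left algebra_simps)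

lemma cmat_adj_eq_iff: "M = cmat_adj M \<longleftrightarrow> (\<forall>i j. M $ i $ j = cnj (M $ j $ i))"
  by (auto simp: vec_eq_iff cmat_adj_def cmat_conj_def transpose_def)

lemma transpose_eq_self_iff: "M = transpose M \<longleftrightarrow> (\<forall>i j. M $ i $ j = M $ j $ i)"
  by (auto simp: vec_eq_iff transpose_def)

lemma cinner_hermitian_commute:
  assumes "M = cmat_adj M"
  shows "cinner x (M *v y) = cnj (cinner y (M *v x))"
proof -
  have M: "M $ i $ j = cnj (M $ j $ i)" for i j
    using assms unfolding cmat_adj_eq_iff by blast
  show ?thesis
    unfolding cinner_def matrix_vector_mult_def
    by (simp add: sum_distrib_left, subst sum.swap) (intro sum.cong refl; subst M; simp)
qed

lemma hermitian_qform_add_i_smult: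
  assumes "M = cmat_adj M" and "Im (cinner s (M *v t)) = 0"
  shows "cmat_qform M (s + \<i> *s t) = cmat_qform M s + cmat_qform M t"
proof -
  have "cinner (s + \<i> *s t) (M *v (s + \<i> *s t)) =
        cinner s (M *v s) + cinner t (M *v t) + \<i> * (cinner s (M *v t) - cnj (cinner s (M *v t)))"
    by (simp add: matrix_vector_right_distrib vector_scalar_commute cinner_add_left cinner_add_right
        cinner_smult_left cinner_smult_right cinner_hermitian_commute[OF assms(1), of t s] algebra_simps)
  then show ?thesis
    using assms(2) by (simp add: complex_diff_cnj)
qed

lemma bimat_hermite_iff:
  "bimat_hermite P1 P2 \<longleftrightarrow> (\<forall>a b. P1 $ a $ b = cnj (P1 $ b $ a) \<and> P2 $ a $ b = P2 $ b $ a)"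
  by (auto simp: bimat_hermite_def cmat_adj_eq_iff transpose_eq_self_iff)

lemma bimat_real_symmetric_iff:
  "bimat_real P1 P2 = transpose (bimat_real P1 P2) \<longleftrightarrow> bimat_hermite P1 P2"
proof -
  have "(\<forall>i \<in> {Inl a, Inr a}. \<forall>j \<in> {Inl b, Inr b}. bimat_real P1 P2 $ i $ j = bimat_real P1 P2 $ j $ i)
        \<longleftrightarrow> P1 $ a $ b = cnj (P1 $ b $ a) \<and> P2 $ a $ b = P2 $ b $ a" for a b
    by (simp add: bimat_real_def complex_eq_iff) (intro iffI conjI; elim conjE; linarith)
  then show ?thesis
    unfolding transpose_eq_self_iff bimat_hermite_iff all_Plus_blocks_iff by presburger
qed

lemma bimat_lift_hermitian_iff:
  "bimat_lift P1 P2 = cmat_adj (bimat_lift P1 P2) \<longleftrightarrow> bimat_hermite P1 P2"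
proof -
  have "(\<forall>i \<in> {Inl a, Inr a}. \<forall>j \<in> {Inl b, Inr b}. bimat_lift P1 P2 $ i $ j = cnj (bimat_lift P1 P2 $ j $ i))
        \<longleftrightarrow> P1 $ a $ b = cnj (P1 $ b $ a) \<and> P2 $ a $ b = P2 $ b $ a" for a b
    by (auto simp: bimat_lift_def)
  then show ?thesis
    unfolding cmat_adj_eq_iff bimat_hermite_iff all_Plus_blocks_iff by presburger
qed

definition cvec_real :: "complex^'n \<Rightarrow> real^('n+'n)" where
  "cvec_real x = (\<chi> i. case i of Inl a \<Rightarrow> Re (x $ a) | Inr a \<Rightarrow> Im (x $ a))"

definition rvec_complex :: "real^('n+'n) \<Rightarrow> complex^'n" where
  "rvec_complex w = (\<chi> a. Complex (w $ Inl a) (w $ Inr a))"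

lemma cvec_real_rvec_complex: "cvec_real (rvec_complex w) = w"
  by (simp add: cvec_real_def rvec_complex_def vec_eq_iff split: sum.split)

lemma surj_cvec_real: "surj cvec_real"
  by (metis cvec_real_rvec_complex surjI)

lemma cvec_real_eq_0_iff: "cvec_real x = 0 \<longleftrightarrow> x = 0"
  by (auto simp: cvec_real_def vec_eq_iff complex_eq_iff split: sum.split)

lemma bimat_qform_eq_real:
  "bimat_qform P1 P2 x = cvec_real x \<bullet> (bimat_real P1 P2 *v cvec_real x)"
  unfolding cinner_def bimat_apply_def bimat_real_def cvec_real_def inner_vec_def
    matrix_vector_mult_def cmat_conj_def cvec_conj_def
  by (simp add: sum_UNIV_Plus sum_distrib_left distrib_left flip: sum.distrib)
    (intro sum.cong refl; simp add: algebra_simps)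

lemma bimat_pd_iff_rmat_pd_real: "bimat_pd P1 P2 \<longleftrightarrow> rmat_pd (bimat_real P1 P2)"
  unfolding bimat_pd_def rmat_pd_def bimat_real_symmetric_iff bimat_qform_eq_real
  using all_nonzero_surj_iff[OF surj_cvec_real cvec_real_eq_0_iff,
      where P = "\<lambda>w. 0 < w \<bullet> (bimat_real P1 P2 *v w)"] by simp

lemma bimat_psd_iff_rmat_psd_real: "bimat_psd P1 P2 \<longleftrightarrow> rmat_psd (bimat_real P1 P2)"
  unfolding bimat_psd_def rmat_psd_def bimat_real_symmetric_iff bimat_qform_eq_real
  using all_nonzero_surj_iff[OF surj_cvec_real cvec_real_eq_0_iff,
      where P = "\<lambda>w. 0 \<le> w \<bullet> (bimat_real P1 P2 *v w)"] by simp

definition cvec_lift :: "complex^'n \<Rightarrow> complex^('n+'n)" where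
  "cvec_lift x = (\<chi> i. case i of Inl a \<Rightarrow> x $ a | Inr a \<Rightarrow> cnj (x $ a))"

lemma cvec_lift_eq_0_iff [simp]: "cvec_lift x = 0 \<longleftrightarrow> x = 0"
  by (auto simp: cvec_lift_def vec_eq_iff split: sum.split)

lemma cinner_cvec_lift_bimat_lift:
  "cinner (cvec_lift p) (bimat_lift P1 P2 *v cvec_lift q) = 2 * Re (cinner p (bimat_apply P1 P2 q))"
proof -
  have "cinner (cvec_lift p) (bimat_lift P1 P2 *v cvec_lift q) =
        cinner p (bimat_apply P1 P2 q) + cnj (cinner p (bimat_apply P1 P2 q))"
    unfolding cinner_def bimat_apply_def bimat_lift_def cvec_lift_def
      matrix_vector_mult_def cmat_conj_def cvec_conj_def
    by (simp add: sum_UNIV_Plus sum_distrib_left distrib_left flip: sum.distrib)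
      (intro sum.cong refl; simp add: algebra_simps)
  then show ?thesis
    by (simp add: complex_add_cnj)
qed

lemma cvec_lift_decompose:
  obtains p q where "z = cvec_lift p + \<i> *s cvec_lift q"
proof
  show "z = cvec_lift (\<chi> a. (z $ Inl a + cnj (z $ Inr a)) / 2) +
            \<i> *s cvec_lift (\<chi> a. - \<i> * (z $ Inl a - cnj (z $ Inr a)) / 2)"
    by (simp add: vec_eq_iff cvec_lift_def complex_eq_iff field_simps split: sum.split)
qed

lemma bimat_lift_qform:
  assumes "bimat_hermite P1 P2"
  shows "cmat_qform (bimat_lift P1 P2) (cvec_lift p + \<i> *s cvec_lift q) =
         2 * bimat_qform P1 P2 p + 2 * bimat_qform P1 P2 q"
  using assms
  by (simp add: hermitian_qform_add_i_smult cinner_cvec_lift_bimat_lift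
      flip: bimat_lift_hermitian_iff)

lemma cmat_qform_bimat_lift_cvec_lift:
  "cmat_qform (bimat_lift P1 P2) (cvec_lift x) = 2 * bimat_qform P1 P2 x"
  by (simp add: cinner_cvec_lift_bimat_lift)

lemma bimat_pd_iff_cmat_pd_lift: "bimat_pd P1 P2 \<longleftrightarrow> cmat_pd (bimat_lift P1 P2)"
proof (cases "bimat_hermite P1 P2")
  case False
  then show ?thesis by (simp add: bimat_pd_def cmat_pd_def bimat_lift_hermitian_iff)
next
  case herm: True
  have "(\<forall>z. z \<noteq> 0 \<longrightarrow> 0 < cmat_qform (bimat_lift P1 P2) z) \<longleftrightarrow>
        (\<forall>x. x \<noteq> 0 \<longrightarrow> 0 < bimat_qform P1 P2 x)"
  proof
    assume "\<forall>z. z \<noteq> 0 \<longrightarrow> 0 < cmat_qform (bimat_lift P1 P2) z"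
    then have "x \<noteq> 0 \<Longrightarrow> 0 < cmat_qform (bimat_lift P1 P2) (cvec_lift x)" for x
      by simp
    then show "\<forall>x. x \<noteq> 0 \<longrightarrow> 0 < bimat_qform P1 P2 x"
      by (simp add: cmat_qform_bimat_lift_cvec_lift)
  next
    assume pos: "\<forall>x. x \<noteq> 0 \<longrightarrow> 0 < bimat_qform P1 P2 x"
    then have nonneg: "0 \<le> bimat_qform P1 P2 x" for x
      by (cases "x = 0") (auto intro: less_imp_le)
    show "\<forall>z. z \<noteq> 0 \<longrightarrow> 0 < cmat_qform (bimat_lift P1 P2) z"
    proof (intro allI impI)
      fix z :: "complex^('a+'a)"
      assume "z \<noteq> 0"
      obtain p q where z: "z = cvec_lift p + \<i> *s cvec_lift q"
        by (rule cvec_lift_decompose)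
      with \<open>z \<noteq> 0\<close> have "p \<noteq> 0 \<or> q \<noteq> 0"
        by (metis cvec_lift_eq_0_iff vector_smult_rzero add_0)
      then show "0 < cmat_qform (bimat_lift P1 P2) z"
        unfolding z bimat_lift_qform[OF herm]
        using pos nonneg[of p] nonneg[of q] by (auto intro: add_pos_nonneg add_nonneg_pos)
    qed
  qed
  with herm show ?thesis
    by (simp add: bimat_pd_def cmat_pd_def bimat_lift_hermitian_iff)
qed

lemma bimat_psd_iff_cmat_psd_lift: "bimat_psd P1 P2 \<longleftrightarrow> cmat_psd (bimat_lift P1 P2)"
proof (cases "bimat_hermite P1 P2")
  case False
  then show ?thesis by (simp add: bimat_psd_def cmat_psd_def bimat_lift_hermitian_iff)
next
  case herm: True
  have "(\<forall>z. z \<noteq> 0 \<longrightarrow> 0 \<le> cmat_qform (bimat_lift P1 P2) z) \<longleftrightarrow>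
        (\<forall>x. x \<noteq> 0 \<longrightarrow> 0 \<le> bimat_qform P1 P2 x)"
  proof
    assume "\<forall>z. z \<noteq> 0 \<longrightarrow> 0 \<le> cmat_qform (bimat_lift P1 P2) z"
    then have "x \<noteq> 0 \<Longrightarrow> 0 \<le> cmat_qform (bimat_lift P1 P2) (cvec_lift x)" for x
      by simp
    then show "\<forall>x. x \<noteq> 0 \<longrightarrow> 0 \<le> bimat_qform P1 P2 x"
      by (simp add: cmat_qform_bimat_lift_cvec_lift)
  next
    assume "\<forall>x. x \<noteq> 0 \<longrightarrow> 0 \<le> bimat_qform P1 P2 x"
    then have nonneg: "0 \<le> bimat_qform P1 P2 x" for x
      by (cases "x = 0") auto
    show "\<forall>z. z \<noteq> 0 \<longrightarrow> 0 \<le> cmat_qform (bimat_lift P1 P2) z"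
    proof (intro allI impI)
      fix z :: "complex^('a+'a)"
      obtain p q where z: "z = cvec_lift p + \<i> *s cvec_lift q"
        by (rule cvec_lift_decompose)
      show "0 \<le> cmat_qform (bimat_lift P1 P2) z"
        unfolding z bimat_lift_qform[OF herm] using nonneg[of p] nonneg[of q] by simp
    qed
  qed
  with herm show ?thesis
    by (simp add: bimat_psd_def cmat_psd_def bimat_lift_hermitian_iff)
qed

definition bimat_of_real :: "real^('n+'n)^('n+'n) \<Rightarrow> (complex^'n^'n) \<times> (complex^'n^'n)" where
  "bimat_of_real P =
     ((\<chi> a b. Complex ((P $ Inl a $ Inl b + P $ Inr a $ Inr b) / 2)
                      ((P $ Inr a $ Inl b - P $ Inl a $ Inr b) / 2)),
      (\<chi> a b. Complex ((P $ Inl a $ Inl b - P $ Inr a $ Inr b) / 2)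
                      (- (P $ Inl a $ Inr b + P $ Inr a $ Inl b) / 2)))"

lemma bimat_real_bimat_of_real: "bimat_real (fst (bimat_of_real P)) (snd (bimat_of_real P)) = P"
  by (simp add: vec_eq_iff bimat_real_def bimat_of_real_def field_simps split: sum.split)

lemma bimat_of_real_bimat_real: "bimat_of_real (bimat_real P1 P2) = (P1, P2)"
  by (simp add: vec_eq_iff bimat_real_def bimat_of_real_def complex_eq_iff field_simps)

lemma bij_bimat_real: "bij (\<lambda>Q. bimat_real (fst Q) (snd Q))"
  by (rule o_bij[where g = bimat_of_real])
    (simp_all add: fun_eq_iff bimat_real_bimat_of_real bimat_of_real_bimat_real)

theorem lemma7:
  shows "(\<forall>P1 P2 :: complex^'n^'n.
            (bimat_pd P1 P2 \<longleftrightarrow> rmat_pd (bimat_real P1 P2)) \<and>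
            (bimat_pd P1 P2 \<longleftrightarrow> cmat_pd (bimat_lift P1 P2)) \<and>
            (bimat_psd P1 P2 \<longleftrightarrow> rmat_psd (bimat_real P1 P2)) \<and>
            (bimat_psd P1 P2 \<longleftrightarrow> cmat_psd (bimat_lift P1 P2))) \<and>
         (\<forall>P :: real^('n+'n)^('n+'n).
            (rmat_pd P \<longleftrightarrow>
               (\<exists>!Q :: (complex^'n^'n) \<times> (complex^'n^'n).
                  bimat_pd (fst Q) (snd Q) \<and> bimat_real (fst Q) (snd Q) = P)) \<and>
            (rmat_psd P \<longleftrightarrow>
               (\<exists>!Q :: (complex^'n^'n) \<times> (complex^'n^'n).
                  bimat_psd (fst Q) (snd Q) \<and> bimat_real (fst Q) (snd Q) = P)))"
proof (intro conjI allI)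
  fix P :: "real^('n+'n)^('n+'n)"
  show "rmat_pd P \<longleftrightarrow> (\<exists>!Q. bimat_pd (fst Q) (snd Q) \<and> bimat_real (fst Q) (snd Q) = P)"
    by (rule ex1_preimage_iff[OF bij_bimat_real]) (simp add: bimat_pd_iff_rmat_pd_real)
  show "rmat_psd P \<longleftrightarrow> (\<exists>!Q. bimat_psd (fst Q) (snd Q) \<and> bimat_real (fst Q) (snd Q) = P)"
    by (rule ex1_preimage_iff[OF bij_bimat_real]) (simp add: bimat_psd_iff_rmat_psd_real)
qed (rule bimat_pd_iff_rmat_pd_real bimat_pd_iff_cmat_pd_lift
       bimat_psd_iff_rmat_psd_real bimat_psd_iff_cmat_psd_lift)+

end
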